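(* If $f_N\in H_N^{\mathrm{sip}}$ converges weakly to $f\in H^{\mathrm{sbm}}$ with respect to the Hilbert space convergence $H_N^{\mathrm{sip}}\to H^{\mathrm{sbm}}$, then $f_N$ (viewed as an element of $H_N^{\mathrm{rw}}$) also converges weakly to $f$ (viewed as an element of $H^{\mathrm{bm}}$, i.e. its Lebesgue a.e. class) with respect to the Hilbert space convergence $H_N^{\mathrm{rw}}\to H^{\mathrm{bm}}$.
   Context: $\gamma>0$; $\mu_N$ gives mass $\frac1N$ to each point of $\frac1N\mathbb Z$; $\nu_{\gamma,N}=\mu_N+\sqrt2\gamma\delta_0$. $H_N^{\mathrm{rw}}=L^2(\frac1N\mathbb Z,\mu_N)$, $H^{\mathrm{bm}}=L^2(\mathbb R,dx)$, Hilbert convergence witnessed by $C^{\mathrm{rw}}=C_c^\infty(\mathbb R)$ and $\Phi_Nf=f|_{\frac1N\mathbb Z}$. $H_N^{\mathrm{sip}}=L^2(\frac1N\mathbb Z,\nu_{\gamma,N})$, $H^{\mathrm{sbm}}=L^2(\mathbb R,dx+\sqrt2\gamma\delta_0)$, Hilbert convergence witnessed by $C^{\mathrm{sip}}=\{f+\lambda\mathbf 1_{\{0\}}:f\in C_c^\infty(\mathbb R),\lambda\in\mathbb R\}$ and $\Phi_Nf=f|_{\frac1N\mathbb Z}$. In either setting: $g_N\in H_N$ converges strongly to $g\in H$ if there exist $\tilde g_M$ in the respective $C$ with $\|\tilde g_M-g\|_H\to0$ and $\lim_M\limsup_N\|\Phi_N\tilde g_M-g_N\|_{H_N}=0$; $f_N$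 converges weakly to $f$ if $\langle f_N,g_N\rangle_{H_N}\to\langle f,g\rangle_H$ for every sequence $g_N$ converging strongly to $g$. *)

theory Defs
  imports "HOL-Analysis.Analysis"
begin

text \<open>Points of the lattice (1/N)Z are indexed by k :: int, the point being k/N.  The parameter c is the mass of
  the atom at 0: c = 0 gives the random walk / Brownian motion setting,
  c = sqrt 2 * gamma the sticky (SIP / sticky BM) setting.\<close>

definition smooth_real :: "(real \<Rightarrow> real) \<Rightarrow> bool" where
  "smooth_real f \<longleftrightarrow> (\<forall>n x. ((deriv ^^ n) f) differentiable (at x))"

definition Cc_infty :: "(real \<Rightarrow> real) set" where
  "Cc_infty = {f. smooth_real f \<and> (\<exists>R. \<forall>x. \<bar>x\<bar> > R \<longrightarrow> f x = 0)}"

definition C_rw :: "(real \<Rightarrow> real) set" where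
  "C_rw = Cc_infty"

definition C_sip :: "(real \<Rightarrow> real) set" where
  "C_sip = {(\<lambda>x. f x + l * indicator {0} x) | f l. f \<in> Cc_infty}"

definition Phi :: "nat \<Rightarrow> (real \<Rightarrow> real) \<Rightarrow> int \<Rightarrow> real" where
  "Phi N f = (\<lambda>k. f (real_of_int k / real N))"

definition disc_mem :: "(int \<Rightarrow> real) \<Rightarrow> bool" where
  "disc_mem u \<longleftrightarrow> (\<lambda>k. (u k)\<^sup>2) summable_on UNIV"

definition disc_inner :: "real \<Rightarrow> nat \<Rightarrow> (int \<Rightarrow> real) \<Rightarrow> (int \<Rightarrow> real) \<Rightarrow> real" where
  "disc_inner c N u v = (\<Sum>\<^sub>\<infinity>k. u k * v k) / real N + c * u 0 * v 0"

definition disc_norm :: "real \<Rightarrow> nat \<Rightarrow> (int \<Rightarrow> real) \<Rightarrow> real" where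
  "disc_norm c N u = sqrt (disc_inner c N u u)"

definition cont_mem :: "(real \<Rightarrow> real) \<Rightarrow> bool" where
  "cont_mem f \<longleftrightarrow> f \<in> borel_measurable borel \<and> integrable lborel (\<lambda>x. (f x)\<^sup>2)"

definition cont_inner :: "real \<Rightarrow> (real \<Rightarrow> real) \<Rightarrow> (real \<Rightarrow> real) \<Rightarrow> real" where
  "cont_inner c f g = (LINT x|lborel. f x * g x) + c * f 0 * g 0"

definition cont_norm :: "real \<Rightarrow> (real \<Rightarrow> real) \<Rightarrow> real" where
  "cont_norm c f = sqrt (cont_inner c f f)"

definition strong_conv ::
  "real \<Rightarrow> (real \<Rightarrow> real) set \<Rightarrow> (nat \<Rightarrow> int \<Rightarrow> real) \<Rightarrow> (real \<Rightarrow> real) \<Rightarrow> bool" where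
  "strong_conv c C gs g \<longleftrightarrow>
     (\<forall>N\<ge>1. disc_mem (gs N)) \<and> cont_mem g \<and>
     (\<exists>gt :: nat \<Rightarrow> real \<Rightarrow> real. (\<forall>M. gt M \<in> C) \<and>
        (\<lambda>M. cont_norm c (\<lambda>x. gt M x - g x)) \<longlonglongrightarrow> 0 \<and>
        (\<lambda>M. limsup (\<lambda>N. ereal (disc_norm c N (\<lambda>k. Phi N (gt M) k - gs N k))))
           \<longlonglongrightarrow> 0)"

definition weak_conv ::
  "real \<Rightarrow> (real \<Rightarrow> real) set \<Rightarrow> (nat \<Rightarrow> int \<Rightarrow> real) \<Rightarrow> (real \<Rightarrow> real) \<Rightarrow> bool" where
  "weak_conv c C fs f \<longleftrightarrow>
     (\<forall>gs g. strong_conv c C gs g \<longrightarrow>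
        (\<lambda>N. disc_inner c N (fs N) (gs N)) \<longlonglongrightarrow> cont_inner c f g)"

end

theory Submission imports Defs begin

text \<open>Pairing with the lattice indicator of the origin, whose continuum limit vanishes
  almost everywhere but keeps the atom, turns SIP weak convergence into \<open>fs N 0 \<rightarrow> f 0\<close>.
  A random-walk test sequence \<open>gs N \<rightarrow> g\<close> becomes an SIP test sequence with the same
  \<open>L\<^sup>2\<close> limit once its value at the origin is set to 0, and the two pairings then differ
  by \<open>fs N 0 * gs N 0 / N\<close>. This correction vanishes because a single lattice value is at
  most \<open>sqrt N\<close> times the discrete norm, so \<open>gs N 0 / N\<close> is controlled by the
  approximation error of \<open>gs N\<close> through smooth functions.\<close>

lemma summable_on_fun_upd:
  fixes h :: "'a \<Rightarrow> 'b::{topological_ab_group_add, t2_space}"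
  assumes "h summable_on UNIV"
  shows "h(a := b) summable_on UNIV"
proof -
  have "h summable_on (UNIV - {a})"
    using summable_on_cofin_subset[OF assms, of "{a}"] by simp
  then have "h(a := b) summable_on (UNIV - {a})"
    by (rule summable_on_cong[THEN iffD1, rotated]) simp
  then have "(h(a := b) has_sum (b + infsum (h(a := b)) (UNIV - {a}))) (insert a (UNIV - {a}))"
    using has_sum_insert[of a "UNIV - {a}" "h(a := b)"] by (simp add: has_sum_infsum)
  then show ?thesis
    by (auto simp: summable_on_def insert_absorb)
qed

lemma infsum_fun_upd:
  fixes h :: "'a \<Rightarrow> 'b::{topological_ab_group_add, t2_space}"
  assumes "h summable_on UNIV"
  shows "infsum (h(a := b)) UNIV = infsum h UNIV - h a + b"
proof -
  have h: "h summable_on (UNIV - {a})"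
    using summable_on_cofin_subset[OF assms, of "{a}"] by simp
  have h': "h(a := b) summable_on (UNIV - {a})"
    using h by (rule summable_on_cong[THEN iffD1, rotated]) simp
  have "infsum h UNIV = h a + infsum h (UNIV - {a})"
    using infsum_insert[OF h, of a] by (simp add: insert_absorb)
  moreover have "infsum (h(a := b)) (UNIV - {a}) = infsum h (UNIV - {a})"
    by (rule infsum_cong) simp
  moreover have "infsum (h(a := b)) UNIV = b + infsum (h(a := b)) (UNIV - {a})"
    using infsum_insert[OF h', of a] by (simp add: insert_absorb)
  ultimately show ?thesis
    by (simp add: algebra_simps)
qed

lemma disc_mem_fun_upd:
  assumes "disc_mem u"
  shows "disc_mem (u(k := a))"
proof -
  have "(\<lambda>j. ((u(k := a)) j)\<^sup>2) = (\<lambda>j. (u j)\<^sup>2)(k := a\<^sup>2)"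
    by auto
  then show ?thesis
    using assms summable_on_fun_upd unfolding disc_mem_def by metis
qed

lemma disc_mem_finite_support:
  assumes "finite {k. u k \<noteq> 0}"
  shows "disc_mem u"
proof -
  have "(\<lambda>k. (u k)\<^sup>2) summable_on {k. u k \<noteq> 0}"
    using assms by simp
  then show ?thesis
    unfolding disc_mem_def by (rule summable_on_cong_neutral[THEN iffD1, rotated -1]) auto
qed

lemma disc_mem_diff:
  assumes "disc_mem u" "disc_mem v"
  shows "disc_mem (\<lambda>k. u k - v k)"
  unfolding disc_mem_def
proof (rule summable_on_comparison_test)
  show "(\<lambda>k. 2 * (u k)\<^sup>2 + 2 * (v k)\<^sup>2) summable_on UNIV"
    using assms unfolding disc_mem_def by (intro summable_on_add summable_on_cmult_right)
  show "(u k - v k)\<^sup>2 \<le> 2 * (u k)\<^sup>2 + 2 * (v k)\<^sup>2" for k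
    using zero_le_power2[of "u k + v k"] by (simp add: power2_eq_square algebra_simps)
qed simp

lemma disc_mem_mult_summable:
  assumes "disc_mem u" "disc_mem v"
  shows "(\<lambda>k. u k * v k) summable_on UNIV"
proof -
  have "(\<lambda>k. norm (u k * v k)) summable_on UNIV"
  proof (rule summable_on_comparison_test)
    show "(\<lambda>k. (u k)\<^sup>2 + (v k)\<^sup>2) summable_on UNIV"
      using assms unfolding disc_mem_def by (intro summable_on_add)
    show "norm (u k * v k) \<le> (u k)\<^sup>2 + (v k)\<^sup>2" for k
    proof -
      have "2 * \<bar>u k\<bar> * \<bar>v k\<bar> \<le> (u k)\<^sup>2 + (v k)\<^sup>2"
        using sum_squares_bound[of "\<bar>u k\<bar>" "\<bar>v k\<bar>"] by simp
      moreover have "0 \<le> \<bar>u k\<bar> * \<bar>v k\<bar>"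
        by simp
      ultimately show ?thesis
        unfolding real_norm_def abs_mult by linarith
    qed
  qed simp
  then show ?thesis
    using summable_on_iff_abs_summable_on_real by blast
qed

lemma disc_norm_nonneg:
  assumes "c \<ge> 0"
  shows "0 \<le> disc_norm c N u"
proof -
  have "0 \<le> (\<Sum>\<^sub>\<infinity>k. u k * u k)"
    by (rule infsum_nonneg) simp
  moreover have "0 \<le> c * u 0 * u 0"
    using assms by (simp add: mult.assoc)
  ultimately show ?thesis
    by (simp add: disc_norm_def disc_inner_def)
qed

lemma disc_inner_fun_upd_zero:
  assumes "(\<lambda>k. u k * v k) summable_on UNIV"
  shows "disc_inner c N u (v(0 := 0)) = disc_inner 0 N u v - u 0 * v 0 / real N"
proof -
  have "(\<lambda>k. u k * (v(0 := 0)) k) = (\<lambda>k. u k * v k)(0 := 0)"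
    by auto
  then show ?thesis
    using infsum_fun_upd[OF assms, of 0 0] by (simp add: disc_inner_def diff_divide_distrib)
qed

lemma disc_norm_fun_upd_zero_le:
  assumes "disc_mem w"
  shows "disc_norm c N (w(0 := 0)) \<le> disc_norm 0 N w"
proof -
  have sum: "(\<lambda>k. w k * w k) summable_on UNIV"
    using assms by (simp add: disc_mem_def power2_eq_square)
  have "(\<lambda>k. (w(0 := 0)) k * (w(0 := 0)) k) = (\<lambda>k. w k * w k)(0 := 0)"
    by auto
  then have "disc_inner c N (w(0 := 0)) (w(0 := 0)) = disc_inner 0 N w w - w 0 * w 0 / real N"
    using infsum_fun_upd[OF sum, of 0 0] by (simp add: disc_inner_def diff_divide_distrib)
  then show ?thesis
    unfolding disc_norm_def by simp
qed

lemma abs_at_zero_le_disc_norm: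
  assumes "disc_mem w" "N \<ge> 1"
  shows "\<bar>w 0\<bar> / real N \<le> disc_norm 0 N w"
proof -
  have sum: "(\<lambda>k. w k * w k) summable_on UNIV"
    using assms by (simp add: disc_mem_def power2_eq_square)
  have "0 \<le> infsum ((\<lambda>k. w k * w k)(0 := 0)) UNIV"
    by (rule infsum_nonneg) simp
  then have "w 0 * w 0 / real N \<le> disc_inner 0 N w w"
    using infsum_fun_upd[OF sum, of 0 0] by (simp add: disc_inner_def divide_right_mono)
  then have "sqrt (w 0 * w 0 / real N) \<le> disc_norm 0 N w"
    unfolding disc_norm_def by (rule real_sqrt_le_mono)
  then have "\<bar>w 0\<bar> / sqrt (real N) \<le> disc_norm 0 N w"
    by (simp add: real_sqrt_divide real_sqrt_mult_self)
  moreover have "\<bar>w 0\<bar> / real N \<le> \<bar>w 0\<bar> / sqrt (real N)"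
  proof (rule divide_left_mono)
    have "1 \<le> sqrt (real N)"
      using assms(2) by simp
    then show "sqrt (real N) \<le> real N"
      using mult_left_mono[of 1 "sqrt (real N)" "sqrt (real N)"] by simp
  qed (use assms(2) in auto)
  ultimately show ?thesis
    by linarith
qed

lemma zero_in_Cc_infty: "(\<lambda>_. 0) \<in> Cc_infty"
proof -
  have "(deriv ^^ n) (\<lambda>_::real. 0::real) = (\<lambda>_. 0)" for n
    by (induction n) auto
  then show ?thesis
    unfolding Cc_infty_def smooth_real_def by auto
qed

lemma Cc_infty_borel_measurable:
  assumes "f \<in> Cc_infty"
  shows "f \<in> borel_measurable borel"
proof -
  have "((deriv ^^ 0) f) differentiable (at x)" for x
    using assms unfolding Cc_infty_def smooth_real_def by blast
  then have "continuous_on UNIV f"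
    by (simp add: continuous_at_imp_continuous_on differentiable_imp_continuous_within)
  then show ?thesis
    by (simp add: borel_measurable_continuous_onI)
qed

lemma disc_mem_Phi_Cc_infty:
  assumes "f \<in> Cc_infty" "N \<ge> 1"
  shows "disc_mem (Phi N f)"
proof (rule disc_mem_finite_support)
  obtain R where R: "\<And>x. \<bar>x\<bar> > R \<Longrightarrow> f x = 0"
    using assms(1) unfolding Cc_infty_def by auto
  have "k \<in> {-\<lceil>R * real N\<rceil>..\<lceil>R * real N\<rceil>}" if "Phi N f k \<noteq> 0" for k
  proof -
    have "\<not> R < \<bar>real_of_int k / real N\<bar>"
      using R that unfolding Phi_def by blast
    then have "\<bar>real_of_int k\<bar> / real N \<le> R"
      by (simp add: abs_divide)
    then have "\<bar>real_of_int k\<bar> \<le> R * real N"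
      using assms(2) by (simp add: pos_divide_le_eq)
    then have "\<bar>k\<bar> \<le> \<lceil>R * real N\<rceil>"
      by linarith
    then show ?thesis
      by (auto simp: abs_le_iff)
  qed
  then have "{k. Phi N f k \<noteq> 0} \<subseteq> {-\<lceil>R * real N\<rceil>..\<lceil>R * real N\<rceil>}"
    by blast
  then show "finite {k. Phi N f k \<noteq> 0}"
    using finite_subset by blast
qed

lemma Phi_fun_upd_zero:
  assumes "N \<ge> 1"
  shows "Phi N (f(0 := a)) = (Phi N f)(0 := a)"
  using assms by (auto simp: Phi_def)

lemma borel_measurable_fun_upd:
  fixes g :: "real \<Rightarrow> real"
  assumes "g \<in> borel_measurable borel"
  shows "g(a := b) \<in> borel_measurable borel"
proof -
  have "g(a := b) = (\<lambda>x. if x \<in> {a} then b else g x)"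
    by auto
  then show ?thesis
    using assms by (simp add: measurable_If_set)
qed

lemma integral_lborel_cong_off_point:
  fixes f g :: "real \<Rightarrow> real"
  assumes "f \<in> borel_measurable borel" "g \<in> borel_measurable borel" "\<And>x. x \<noteq> a \<Longrightarrow> f x = g x"
  shows "integral\<^sup>L lborel f = integral\<^sup>L lborel g"
  using AE_lborel_singleton[of a] by (intro integral_cong_AE) (use assms in \<open>auto elim: eventually_mono\<close>)

lemma cont_mem_fun_upd:
  assumes "cont_mem g"
  shows "cont_mem (g(a := b))"
proof -
  have meas: "g(a := b) \<in> borel_measurable borel"
    using assms unfolding cont_mem_def by (simp add: borel_measurable_fun_upd)
  have "AE x in lborel. (g x)\<^sup>2 = ((g(a := b)) x)\<^sup>2"
    using AE_lborel_singleton[of a] by eventually_elim simp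
  then have "integrable lborel (\<lambda>x. ((g(a := b)) x)\<^sup>2)"
    using assms meas unfolding cont_mem_def by (auto intro: integrable_cong_AE_imp)
  then show ?thesis
    using meas unfolding cont_mem_def by simp
qed

lemma cont_inner_fun_upd_zero:
  assumes "f \<in> borel_measurable borel" "g \<in> borel_measurable borel"
  shows "cont_inner c f (g(0 := b)) = cont_inner 0 f g + c * f 0 * b"
proof -
  have "g(0 := b) \<in> borel_measurable borel"
    using assms(2) by (rule borel_measurable_fun_upd)
  then have "(LINT x|lborel. f x * (g(0 := b)) x) = (LINT x|lborel. f x * g x)"
    using assms by (intro integral_lborel_cong_off_point[of _ _ 0] borel_measurable_times) auto
  then show ?thesis
    by (simp add: cont_inner_def)
qed

lemma cont_norm_fun_upd_zero:
  assumes "h \<in> borel_measurable borel"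
  shows "cont_norm c (h(0 := 0)) = cont_norm 0 h"
proof -
  have "h(0 := 0) \<in> borel_measurable borel"
    using assms by (rule borel_measurable_fun_upd)
  then have "(LINT x|lborel. (h(0 := 0)) x * (h(0 := 0)) x) = (LINT x|lborel. h x * h x)"
    using assms by (intro integral_lborel_cong_off_point[of _ _ 0] borel_measurable_times) auto
  then show ?thesis
    by (simp add: cont_norm_def cont_inner_def)
qed

lemma tendsto_zero_by_approximation:
  fixes x :: "nat \<Rightarrow> real" and a b :: "nat \<Rightarrow> nat \<Rightarrow> real"
  assumes bound: "\<And>M. \<forall>\<^sub>F N in sequentially. \<bar>x N\<bar> \<le> a M N + b M N"
    and a: "\<And>M. a M \<longlonglongrightarrow> 0"
    and b: "(\<lambda>M. limsup (\<lambda>N. ereal (b M N))) \<longlonglongrightarrow> 0"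
  shows "x \<longlonglongrightarrow> 0"
proof (rule tendstoI)
  fix r :: real
  assume "r > 0"
  then have "\<forall>\<^sub>F M in sequentially. limsup (\<lambda>N. ereal (b M N)) < ereal (r / 2)"
    using b by (intro order_tendstoD(2)) auto
  then obtain M where "limsup (\<lambda>N. ereal (b M N)) < ereal (r / 2)"
    by (auto simp: eventually_sequentially)
  then have "\<forall>\<^sub>F N in sequentially. b M N < r / 2"
    using Limsup_lessD by fastforce
  moreover have "\<forall>\<^sub>F N in sequentially. a M N < r / 2"
    using a \<open>r > 0\<close> by (intro order_tendstoD(2)) auto
  ultimately show "\<forall>\<^sub>F N in sequentially. dist (x N) 0 < r"
    using bound[of M] by eventually_elim auto
qed

lemma strong_conv_Phi:
  assumes "h \<in> C" "cont_mem h" "\<And>N. N \<ge> 1 \<Longrightarrow> disc_mem (Phi N h)"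
  shows "strong_conv c C (\<lambda>N. Phi N h) h"
  unfolding strong_conv_def
  using assms by (intro conjI allI impI exI[of _ "\<lambda>_. h"])
    (auto simp: cont_norm_def cont_inner_def disc_norm_def disc_inner_def Limsup_const zero_ereal_def[symmetric])

lemma weak_conv_sip_tendsto_at_zero:
  assumes "c > 0" "cont_mem f" "weak_conv c C_sip fs f"
  shows "(\<lambda>N. fs N 0) \<longlonglongrightarrow> f 0"
proof -
  define \<delta> :: "real \<Rightarrow> real" where "\<delta> = (\<lambda>_. 0)(0 := 1)"
  have "\<delta> \<in> C_sip"
    unfolding C_sip_def using zero_in_Cc_infty
    by (intro CollectI exI[of _ "\<lambda>_. 0"] exI[of _ 1]) (auto simp: \<delta>_def)
  moreover have "cont_mem \<delta>"
    unfolding \<delta>_def by (rule cont_mem_fun_upd) (simp add: cont_mem_def)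
  moreover have "disc_mem (Phi N \<delta>)" if "N \<ge> 1" for N
    unfolding \<delta>_def Phi_fun_upd_zero[OF that]
    by (rule disc_mem_fun_upd) (simp add: disc_mem_def Phi_def)
  ultimately have "strong_conv c C_sip (\<lambda>N. Phi N \<delta>) \<delta>"
    by (rule strong_conv_Phi)
  then have "(\<lambda>N. disc_inner c N (fs N) (Phi N \<delta>)) \<longlonglongrightarrow> cont_inner c f \<delta>"
    using assms(3) unfolding weak_conv_def by blast
  moreover have "cont_inner c f \<delta> = c * f 0"
    using assms(2) cont_inner_fun_upd_zero[of f "\<lambda>_. 0" c 1]
    unfolding \<delta>_def cont_mem_def by (simp add: cont_inner_def)
  moreover have "\<forall>\<^sub>F N in sequentially. disc_inner c N (fs N) (Phi N \<delta>) = (1 / real N + c) * fs N 0"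
    using eventually_ge_at_top[of 1]
  proof eventually_elim
    case (elim N)
    then have "(\<lambda>k. fs N k * Phi N \<delta> k) = (\<lambda>_. 0)(0 := fs N 0)"
      by (auto simp: \<delta>_def Phi_def)
    then have "(\<Sum>\<^sub>\<infinity>k. fs N k * Phi N \<delta> k) = fs N 0"
      using infsum_fun_upd[of "\<lambda>_::int. 0::real" 0 "fs N 0"] by simp
    then show ?case
      by (simp add: disc_inner_def \<delta>_def Phi_def algebra_simps)
  qed
  ultimately have "(\<lambda>N. (1 / real N + c) * fs N 0) \<longlonglongrightarrow> c * f 0"
    by (simp add: tendsto_cong)
  moreover have "(\<lambda>N. 1 / real N + c) \<longlonglongrightarrow> c"
    using tendsto_add[OF lim_const_over_n tendsto_const] by simp
  ultimately have "(\<lambda>N. (1 / real N + c) * fs N 0 / (1 / real N + c)) \<longlonglongrightarrow> c * f 0 / c"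
    using assms(1) by (intro tendsto_divide) auto
  moreover have "1 / real N + c \<noteq> 0" for N
    using assms(1) add_nonneg_pos[of "1 / real N" c] by simp
  ultimately show ?thesis
    using assms(1) by simp
qed

lemma strong_conv_rw_tendsto_at_zero_over_N:
  assumes "strong_conv 0 C_rw gs g"
  shows "(\<lambda>N. gs N 0 / real N) \<longlonglongrightarrow> 0"
proof -
  obtain gt where gs: "\<forall>N\<ge>1. disc_mem (gs N)" and gt: "\<forall>M. gt M \<in> C_rw"
    and lim: "(\<lambda>M. limsup (\<lambda>N. ereal (disc_norm 0 N (\<lambda>k. Phi N (gt M) k - gs N k)))) \<longlonglongrightarrow> 0"
    using assms unfolding strong_conv_def by blast
  show ?thesis
  proof (rule tendsto_zero_by_approximation[OF _ _ lim])
    show "(\<lambda>N. \<bar>gt M 0\<bar> / real N) \<longlonglongrightarrow> 0" for M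
      by (rule lim_const_over_n)
    show "\<forall>\<^sub>F N in sequentially. \<bar>gs N 0 / real N\<bar>
      \<le> \<bar>gt M 0\<bar> / real N + disc_norm 0 N (\<lambda>k. Phi N (gt M) k - gs N k)" for M
      using eventually_ge_at_top[of 1]
    proof eventually_elim
      case (elim N)
      define w where "w = (\<lambda>k. Phi N (gt M) k - gs N k)"
      have "disc_mem w"
        unfolding w_def using gt gs elim
        by (intro disc_mem_diff disc_mem_Phi_Cc_infty) (auto simp: C_rw_def)
      then have "\<bar>w 0\<bar> / real N \<le> disc_norm 0 N w"
        using elim by (rule abs_at_zero_le_disc_norm)
      moreover have "\<bar>gs N 0 / real N\<bar> = \<bar>gt M 0 - w 0\<bar> / real N"
        by (simp add: w_def Phi_def abs_divide)
      moreover have "\<bar>gt M 0 - w 0\<bar> / real N \<le> \<bar>gt M 0\<bar> / real N + \<bar>w 0\<bar> / real N"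
        by (simp add: add_divide_distrib[symmetric] divide_right_mono abs_triangle_ineq4)
      ultimately show ?case
        unfolding w_def by linarith
    qed
  qed
qed

lemma strong_conv_sip_of_strong_conv_rw:
  assumes "strong_conv 0 C_rw gs g" "c \<ge> 0"
  shows "strong_conv c C_sip (\<lambda>N. (gs N)(0 := 0)) (g(0 := 0))"
proof -
  obtain gt where gs: "\<forall>N\<ge>1. disc_mem (gs N)" and g: "cont_mem g" and gt: "\<forall>M. gt M \<in> C_rw"
    and lim_cont: "(\<lambda>M. cont_norm 0 (\<lambda>x. gt M x - g x)) \<longlonglongrightarrow> 0"
    and lim_disc: "(\<lambda>M. limsup (\<lambda>N. ereal (disc_norm 0 N (\<lambda>k. Phi N (gt M) k - gs N k)))) \<longlonglongrightarrow> 0"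
    using assms(1) unfolding strong_conv_def by blast
  have gt_meas: "gt M \<in> borel_measurable borel" for M
    using gt Cc_infty_borel_measurable unfolding C_rw_def by blast
  have g_meas: "g \<in> borel_measurable borel"
    using g unfolding cont_mem_def by blast
  have "(gt M)(0 := 0) \<in> C_sip" for M
  proof -
    have "(gt M)(0 := 0) = (\<lambda>x. gt M x + (- gt M 0) * indicator {0} x)"
      by (auto simp: fun_eq_iff)
    then show ?thesis
      using gt unfolding C_sip_def C_rw_def by blast
  qed
  moreover have "cont_norm c (\<lambda>x. ((gt M)(0 := 0)) x - (g(0 := 0)) x) = cont_norm 0 (\<lambda>x. gt M x - g x)"
    for M
  proof -
    have "(\<lambda>x. ((gt M)(0 := 0)) x - (g(0 := 0)) x) = (\<lambda>x. gt M x - g x)(0 := 0)"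
      by auto
    then show ?thesis
      using cont_norm_fun_upd_zero[of "\<lambda>x. gt M x - g x" c] gt_meas g_meas by simp
  qed
  moreover have disc_le: "disc_norm c N (\<lambda>k. Phi N ((gt M)(0 := 0)) k - ((gs N)(0 := 0)) k)
      \<le> disc_norm 0 N (\<lambda>k. Phi N (gt M) k - gs N k)" if "N \<ge> 1" for M N
  proof -
    have "(\<lambda>k. Phi N ((gt M)(0 := 0)) k - ((gs N)(0 := 0)) k) = (\<lambda>k. Phi N (gt M) k - gs N k)(0 := 0)"
      using that by (auto simp: Phi_fun_upd_zero)
    moreover have "disc_mem (\<lambda>k. Phi N (gt M) k - gs N k)"
      using gt gs that by (intro disc_mem_diff disc_mem_Phi_Cc_infty) (auto simp: C_rw_def)
    ultimately show ?thesis
      by (simp add: disc_norm_fun_upd_zero_le)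
  qed
  moreover have "(\<lambda>M. limsup (\<lambda>N. ereal (disc_norm c N (\<lambda>k. Phi N ((gt M)(0 := 0)) k - ((gs N)(0 := 0)) k))))
      \<longlonglongrightarrow> 0"
  proof (intro tendsto_sandwich[OF _ _ tendsto_const lim_disc] always_eventually allI)
    show "0 \<le> limsup (\<lambda>N. ereal (disc_norm c N (\<lambda>k. Phi N ((gt M)(0 := 0)) k - ((gs N)(0 := 0)) k)))"
      for M using assms(2) disc_norm_nonneg by (intro le_Limsup always_eventually) auto
    show "limsup (\<lambda>N. ereal (disc_norm c N (\<lambda>k. Phi N ((gt M)(0 := 0)) k - ((gs N)(0 := 0)) k)))
      \<le> limsup (\<lambda>N. ereal (disc_norm 0 N (\<lambda>k. Phi N (gt M) k - gs N k)))" for M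
      by (intro Limsup_mono eventually_mono[OF eventually_ge_at_top[of 1]]) (use disc_le in simp)
  qed
  ultimately show ?thesis
    unfolding strong_conv_def using gs g lim_cont
    by (intro conjI allI impI exI[of _ "\<lambda>M. (gt M)(0 := 0)"]) (auto intro: disc_mem_fun_upd cont_mem_fun_upd)
qed

lemma weak_conv_rw_of_weak_conv_sip:
  assumes "c > 0" "\<forall>N\<ge>1. disc_mem (fs N)" "cont_mem f" "weak_conv c C_sip fs f"
  shows "weak_conv 0 C_rw fs f"
  unfolding weak_conv_def
proof (intro allI impI)
  fix gs g
  assume strong: "strong_conv 0 C_rw gs g"
  then have "strong_conv c C_sip (\<lambda>N. (gs N)(0 := 0)) (g(0 := 0))"
    using assms(1) by (intro strong_conv_sip_of_strong_conv_rw) auto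
  then have "(\<lambda>N. disc_inner c N (fs N) ((gs N)(0 := 0))) \<longlonglongrightarrow> cont_inner c f (g(0 := 0))"
    using assms(4) unfolding weak_conv_def by blast
  moreover have "cont_inner c f (g(0 := 0)) = cont_inner 0 f g"
    using assms(3) strong by (simp add: cont_inner_fun_upd_zero cont_mem_def strong_conv_def)
  moreover have "(\<lambda>N. fs N 0 * (gs N 0 / real N)) \<longlonglongrightarrow> f 0 * 0"
    using weak_conv_sip_tendsto_at_zero[OF assms(1,3,4)]
      strong_conv_rw_tendsto_at_zero_over_N[OF strong] by (rule tendsto_mult)
  ultimately have "(\<lambda>N. disc_inner c N (fs N) ((gs N)(0 := 0)) + fs N 0 * (gs N 0 / real N))
      \<longlonglongrightarrow> cont_inner 0 f g"
    using tendsto_add by fastforce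
  moreover have "\<forall>\<^sub>F N in sequentially.
      disc_inner c N (fs N) ((gs N)(0 := 0)) + fs N 0 * (gs N 0 / real N) = disc_inner 0 N (fs N) (gs N)"
    using eventually_ge_at_top[of 1]
  proof eventually_elim
    case (elim N)
    then have "(\<lambda>k. fs N k * gs N k) summable_on UNIV"
      using assms(2) strong by (intro disc_mem_mult_summable) (auto simp: strong_conv_def)
    then show ?case
      by (simp add: disc_inner_fun_upd_zero)
  qed
  ultimately show "(\<lambda>N. disc_inner 0 N (fs N) (gs N)) \<longlonglongrightarrow> cont_inner 0 f g"
    by (rule Lim_transform_eventually)
qed

theorem proposition5p12:
  fixes \<gamma> :: real and fs :: "nat \<Rightarrow> int \<Rightarrow> real" and f :: "real \<Rightarrow> real"
  assumes "\<gamma> > 0"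
    and "\<forall>N\<ge>1. disc_mem (fs N)"
    and "cont_mem f"
    and "weak_conv (sqrt 2 * \<gamma>) C_sip fs f"
  shows "weak_conv 0 C_rw fs f"
  using assms by (intro weak_conv_rw_of_weak_conv_sip[of "sqrt 2 * \<gamma>"]) auto

end
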